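(* Let $K$ be an algebraically closed field, complete with respect to a non-trivial non-archimedean absolute value $|\cdot|_v$, with $\mathrm{char}(K)=0$ or $\mathrm{char}(K)>d$, and let $f\in\mathrm{Poly}_{N,d}(K)$. Then: (1) for every $D\in\mathrm{Div}^*_K(\mathbb{P}^N)$ the limit $G_{f,v}(D)=\lim_{n\to\infty}d^{-n}\lambda_v(f^n_*(D))$ exists; (2) $G_{f,v}(f_*(D))=dG_{f,v}(D)$ for all $D\in\mathrm{Div}^*_K(\mathbb{P}^N)$; (3) if $D\in\mathrm{Div}^*_K(\mathbb{P}^N)$ is preperiodic for $f$, then $G_{f,v}(D)=0$; (4) if $\lambda_v(D)>\mathcal{B}_v(f)$, then $G_{f,v}(D)=\lambda_v(D)$; (5) for every $D\in\mathrm{Div}^*_K(\mathbb{P}^N)$, $|G_{f,v}(D)-\lambda_v(D)|\le 2\mathcal{B}_v(f)$.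
   Context: $N\ge1$, $d\ge2$. $\mathrm{Ind}^*(N,d)$: multi-indices $I=(I_0,\dots,I_N)$ with $\sum I_j=d$, $0<I_N<d$. $\mathrm{Poly}_{N,d}(K)$: tuples $(a_{i,I})_{0\le i<N,I\in\mathrm{Ind}^*(N,d)}$ in $K$, giving $f=[f_0:\cdots:f_N]$ with $f_i=x_i^d+\sum_Ia_{i,I}\mathbf{x}^I$ ($i<N$), $f_N=x_N^d$; $\mathcal{B}_v(f)=\log^+\max|a_{i,I}|_v^{1/I_N}$. $\mathrm{Div}^*_K(\mathbb{P}^N)$: effective divisors over $K$ defined by a form $F_D$ with $F_D(x_0,\dots,x_{N-1},0)=\prod_{i<N}x_i^{e_i}$; $\lambda_v(D)=\log^+\sup_{|\beta_0|_v=\cdots=|\beta_{N-1}|_v=1}\max\{|\beta_N|_v^{-1}:F_D(\beta)=0\}$. $f_*(D)$: push-forward divisor, defined by the Macaulay-resultant form $\mathrm{Res}(F_D,f)$, $\mathrm{Res}(F,f)(y_0,\dots,y_{N-1},1)=\mathrm{Res}_{x}(F,y_0x_N^d-f_0,\dots,y_{N-1}x_N^d-f_{N-1})$; its points are the images of points of $D$; $f(D)$ denotes its radical (reduced divisor with the same support). $D$ is preperiodic for $f$ if the sequence $f^n(D)$, $n\ge0$, takes only finitely many values. *)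

theory Defs
  imports Complex_Main "HOL-Computational_Algebra.Polynomial"
begin

definition logplus :: "real \<Rightarrow> real" where
  "logplus x = (if x \<le> 1 then 0 else ln x)"

definition nonarch_abs :: "('k::field \<Rightarrow> real) \<Rightarrow> bool" where
  "nonarch_abs av \<longleftrightarrow>
     (\<forall>x. 0 \<le> av x) \<and> (\<forall>x. av x = 0 \<longleftrightarrow> x = 0) \<and>
     (\<forall>x y. av (x * y) = av x * av y) \<and>
     (\<forall>x y. av (x + y) \<le> max (av x) (av y))"

definition nontrivial_abs :: "('k::field \<Rightarrow> real) \<Rightarrow> bool" where
  "nontrivial_abs av \<longleftrightarrow> (\<exists>x. x \<noteq> 0 \<and> av x \<noteq> 1)"

definition complete_abs :: "('k::field \<Rightarrow> real) \<Rightarrow> bool" where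
  "complete_abs av \<longleftrightarrow>
     (\<forall>X::nat \<Rightarrow> 'k. (\<forall>e>0. \<exists>M. \<forall>m\<ge>M. \<forall>n\<ge>M. av (X m - X n) < e) \<longrightarrow>
        (\<exists>L. (\<lambda>n. av (X n - L)) \<longlonglongrightarrow> 0))"

definition alg_closed :: "'k::field itself \<Rightarrow> bool" where
  "alg_closed _ \<longleftrightarrow> (\<forall>p :: 'k poly. 0 < degree p \<longrightarrow> (\<exists>x. poly p x = 0))"

text \<open>Points of K^{N+1} are functions nat => K with coordinates > N equal to 0.
  Multi-indices are functions nat => nat vanishing beyond N.\<close>

definition mindices :: "nat \<Rightarrow> nat \<Rightarrow> (nat \<Rightarrow> nat) set" where
  "mindices N e = {I. (\<forall>j>N. I j = 0) \<and> sum I {..N} = e}"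

definition Ind_star :: "nat \<Rightarrow> nat \<Rightarrow> (nat \<Rightarrow> nat) set" where
  "Ind_star N d = {I \<in> mindices N d. 0 < I N \<and> I N < d}"

definition mono :: "nat \<Rightarrow> (nat \<Rightarrow> nat) \<Rightarrow> (nat \<Rightarrow> 'k::field) \<Rightarrow> 'k" where
  "mono N I x = (\<Prod>j\<le>N. x j ^ I j)"

definition is_form :: "nat \<Rightarrow> nat \<Rightarrow> ((nat \<Rightarrow> nat) \<Rightarrow> 'k::field) \<Rightarrow> bool" where
  "is_form N e c \<longleftrightarrow> (\<forall>I. c I \<noteq> 0 \<longrightarrow> I \<in> mindices N e)"

definition eval_form :: "nat \<Rightarrow> nat \<Rightarrow> ((nat \<Rightarrow> nat) \<Rightarrow> 'k::field) \<Rightarrow> (nat \<Rightarrow> 'k) \<Rightarrow> 'k" where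
  "eval_form N e c x = (\<Sum>I\<in>mindices N e. c I * mono N I x)"

text \<open>Div^*_K(P^N): effective divisors defined by a form F_D of degree e with
  F_D(x_0,...,x_{N-1},0) = prod_{i<N} x_i^{e_i}.\<close>
definition Div_star_form :: "nat \<Rightarrow> nat \<Rightarrow> ((nat \<Rightarrow> nat) \<Rightarrow> 'k::field) \<Rightarrow> bool" where
  "Div_star_form N e c \<longleftrightarrow> is_form N e c \<and>
     (\<exists>E. (\<forall>j\<ge>N. E j = 0) \<and> sum E {..<N} = e \<and>
          (\<forall>I. I N = 0 \<longrightarrow> c I = (if I = E then 1 else 0)))"

text \<open>Nonzero points of K^{N+1} (representatives of points of P^N).\<close>
definition pts :: "nat \<Rightarrow> (nat \<Rightarrow> 'k::field) set" where
  "pts N = {x. (\<forall>j>N. x j = 0) \<and> (\<exists>j\<le>N. x j \<noteq> 0)}"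

text \<open>The support of the divisor D (as a cone of representatives).\<close>
definition zero_set :: "nat \<Rightarrow> nat \<Rightarrow> ((nat \<Rightarrow> nat) \<Rightarrow> 'k::field) \<Rightarrow> (nat \<Rightarrow> 'k) set" where
  "zero_set N e c = {x \<in> pts N. eval_form N e c x = 0}"

definition polymap :: "nat \<Rightarrow> nat \<Rightarrow> (nat \<Rightarrow> (nat \<Rightarrow> nat) \<Rightarrow> 'k::field) \<Rightarrow> (nat \<Rightarrow> 'k) \<Rightarrow> (nat \<Rightarrow> 'k)" where
  "polymap N d a x = (\<lambda>i. if i < N then x i ^ d + (\<Sum>I\<in>Ind_star N d. a i I * mono N I x)
                          else if i = N then x N ^ d else 0)"

definition B_v :: "nat \<Rightarrow> nat \<Rightarrow> ('k::field \<Rightarrow> real) \<Rightarrow> (nat \<Rightarrow> (nat \<Rightarrow> nat) \<Rightarrow> 'k) \<Rightarrow> real" where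
  "B_v N d av a = logplus (Max {av (a i I) powr (1 / real (I N)) | i I. i < N \<and> I \<in> Ind_star N d})"

text \<open>Support of the push-forward (f^n)_*(D): the (cone over the) image of the support of D
  under f^n.  Its points are exactly the images of the points of D.\<close>
definition push_set :: "nat \<Rightarrow> nat \<Rightarrow> (nat \<Rightarrow> (nat \<Rightarrow> nat) \<Rightarrow> 'k::field) \<Rightarrow> nat \<Rightarrow> (nat \<Rightarrow> 'k) set \<Rightarrow> (nat \<Rightarrow> 'k) set" where
  "push_set N d a n Z = {y. \<exists>x\<in>Z. \<exists>t. t \<noteq> 0 \<and> y = (\<lambda>j. t * ((polymap N d a ^^ n) x) j)}"

text \<open>lambda_v of a divisor, which depends only on its support Z:
  log^+ sup_{|b_0|=...=|b_{N-1}|=1} max {|b_N|^{-1} : b in Z}.\<close>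
definition lambda_v :: "nat \<Rightarrow> ('k::field \<Rightarrow> real) \<Rightarrow> (nat \<Rightarrow> 'k) set \<Rightarrow> real" where
  "lambda_v N av Z = logplus (Sup ({0} \<union> {inverse (av (b N)) | b. b \<in> Z \<and> (\<forall>i<N. av (b i) = 1)}))"

definition G_seq :: "nat \<Rightarrow> nat \<Rightarrow> ('k::field \<Rightarrow> real) \<Rightarrow> (nat \<Rightarrow> (nat \<Rightarrow> nat) \<Rightarrow> 'k) \<Rightarrow> (nat \<Rightarrow> 'k) set \<Rightarrow> nat \<Rightarrow> real" where
  "G_seq N d av a Z n = lambda_v N av (push_set N d a n Z) / real d ^ n"

definition G_v :: "nat \<Rightarrow> nat \<Rightarrow> ('k::field \<Rightarrow> real) \<Rightarrow> (nat \<Rightarrow> (nat \<Rightarrow> nat) \<Rightarrow> 'k) \<Rightarrow> (nat \<Rightarrow> 'k) set \<Rightarrow> real" where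
  "G_v N d av a Z = lim (G_seq N d av a Z)"

text \<open>D is preperiodic: the reduced divisors f^n(D) take only finitely many values,
  i.e. their supports take finitely many values.\<close>
definition preperiodic :: "nat \<Rightarrow> nat \<Rightarrow> (nat \<Rightarrow> (nat \<Rightarrow> nat) \<Rightarrow> 'k::field) \<Rightarrow> (nat \<Rightarrow> 'k) set \<Rightarrow> bool" where
  "preperiodic N d a Z \<longleftrightarrow> finite (range (\<lambda>n. push_set N d a n Z))"

end

theory Submission
  imports Defs
begin

text \<open>Write \<open>\<ell>\<^sub>n = \<lambda>\<^sub>v(f\<^sup>n\<^sub>*D)\<close> and \<open>B = \<B>\<^sub>v(f)\<close>. Each perturbing monomial of \<open>f\<^sub>i\<close> contains
  a positive power of \<open>x\<^sub>N\<close> with coefficient at most \<open>e\<^sup>B\<close> per power, so at a point with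
  \<open>|x\<^sub>0| = \<dots> = |x\<^sub>N\<^sub>-\<^sub>1| = 1\<close> and \<open>e\<^sup>B|x\<^sub>N| < 1\<close> the ultrametric inequality makes \<open>f\<close> act like
  \<open>x \<mapsto> x\<^sup>d\<close>. Normalising preimages by their largest coordinate, this yields
  \<open>\<ell>\<^sub>n\<^sub>+\<^sub>1 \<le> d max(\<ell>\<^sub>n, B)\<close>, with equality \<open>\<ell>\<^sub>n\<^sub>+\<^sub>1 = d\<ell>\<^sub>n\<close> as soon as \<open>\<ell>\<^sub>n > B\<close>.
  Hence \<open>\<ell>\<^sub>n/d\<^sup>n\<close> is eventually constant once \<open>\<ell>\<close> exceeds \<open>B\<close> (and the first such value is at
  most \<open>dB\<close>), or else it is bounded by \<open>B/d\<^sup>n\<close>; all five assertions follow from this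
  dichotomy.\<close>

section \<open>Non-archimedean absolute values\<close>

locale nonarch_valued =
  fixes av :: "'k::field \<Rightarrow> real"
  assumes nonarch: "nonarch_abs av"
begin

lemma av_nonneg: "0 \<le> av x"
  using nonarch unfolding nonarch_abs_def by blast

lemma av_eq_0_iff [simp]: "av x = 0 \<longleftrightarrow> x = 0"
  using nonarch unfolding nonarch_abs_def by blast

lemma av_0 [simp]: "av 0 = 0"
  using av_eq_0_iff by blast

lemma av_mult [simp]: "av (x * y) = av x * av y"
  using nonarch unfolding nonarch_abs_def by blast

lemma av_add_le_max: "av (x + y) \<le> max (av x) (av y)"
  using nonarch unfolding nonarch_abs_def by blast

lemma av_1 [simp]: "av 1 = 1"
proof -
  have "av 1 = av 1 * av 1"
    using av_mult[of 1 1] by simp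
  then show ?thesis
    by (metis av_eq_0_iff mult_cancel_right1 one_neq_zero)
qed

lemma av_power [simp]: "av (x ^ n) = av x ^ n"
  by (induction n) simp_all

lemma av_minus [simp]: "av (- x) = av x"
proof -
  have "(av (-1) - 1) * (av (-1) + 1) = 0"
    using av_mult[of "-1" "-1"] by (simp add: algebra_simps)
  then have "av (-1) = 1"
    using av_nonneg[of "-1"] by auto
  then show ?thesis
    using av_mult[of "-1" x] by simp
qed

lemma av_inverse: "av (inverse x) = inverse (av x)"
proof (cases "x = 0")
  case False
  then have "av x * av (inverse x) = 1"
    using av_mult[of x "inverse x"] by simp
  then show ?thesis
    by (metis inverse_unique)
qed simp

lemma av_divide [simp]: "av (x / y) = av x / av y"
  by (simp add: divide_inverse av_inverse)

lemma av_prod: "av (prod g A) = (\<Prod>i\<in>A. av (g i))"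
  by (induction A rule: infinite_finite_induct) simp_all

lemma av_sum_le: "(\<And>i. i \<in> A \<Longrightarrow> av (g i) \<le> R) \<Longrightarrow> 0 \<le> R \<Longrightarrow> av (sum g A) \<le> R"
proof (induction A rule: infinite_finite_induct)
  case (insert x F)
  then have "max (av (g x)) (av (sum g F)) \<le> R"
    by simp
  then show ?case
    using insert(1,2) order_trans[OF av_add_le_max[of "g x" "sum g F"]] by simp
qed simp_all

lemma av_sum_less: "(\<And>i. i \<in> A \<Longrightarrow> av (g i) < R) \<Longrightarrow> 0 < R \<Longrightarrow> av (sum g A) < R"
proof (induction A rule: infinite_finite_induct)
  case (insert x F)
  then have "max (av (g x)) (av (sum g F)) < R"
    by simp
  then show ?case
    using insert(1,2) le_less_trans[OF av_add_le_max[of "g x" "sum g F"]] by simp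
qed simp_all

lemma av_add_eq_of_less:
  assumes "av v < av u"
  shows "av (u + v) = av u"
proof -
  have "av (u + v) \<le> av u"
    using av_add_le_max[of u v] assms by simp
  moreover have "av u \<le> max (av (u + v)) (av v)"
    using av_add_le_max[of "u + v" "- v"] by simp
  ultimately show ?thesis
    using assms by linarith
qed

lemma av_mono: "av (mono N I x) = (\<Prod>j<N. av (x j) ^ I j) * av (x N) ^ I N"
  unfolding mono_def av_prod lessThan_Suc_atMost[symmetric] by simp

lemma av_mono_le:
  assumes "\<forall>j\<le>N. av (x j) \<le> 1"
  shows "av (mono N I x) \<le> av (x N) ^ I N"
proof -
  have "(\<Prod>j<N. av (x j) ^ I j) \<le> 1"
    using assms by (intro prod_le_1) (auto simp: av_nonneg power_le_one)
  then show ?thesis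
    unfolding av_mono by (simp add: av_nonneg mult_left_le_one_le prod_nonneg)
qed

lemma av_mono_of_units: "\<forall>j<N. av (x j) = 1 \<Longrightarrow> av (mono N I x) = av (x N) ^ I N"
  unfolding av_mono by simp

end

lemma finite_mindices: "finite (mindices N e)"
proof (rule finite_subset)
  show "mindices N e \<subseteq> {I. \<forall>j. (j \<in> {..N} \<longrightarrow> I j \<in> {..e}) \<and> (j \<notin> {..N} \<longrightarrow> I j = 0)}"
  proof
    fix I
    assume "I \<in> mindices N e"
    then have "sum I {..N} = e" "\<forall>j>N. I j = 0"
      by (auto simp: mindices_def)
    moreover have "I j \<le> e" if "j \<le> N" for j
      using that \<open>sum I {..N} = e\<close> member_le_sum[of j "{..N}" I] by simp
    ultimately show "I \<in> {I. \<forall>j. (j \<in> {..N} \<longrightarrow> I j \<in> {..e}) \<and> (j \<notin> {..N} \<longrightarrow> I j = 0)}"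
      by auto
  qed
  show "finite {I. \<forall>j. (j \<in> {..N} \<longrightarrow> I j \<in> {..e}) \<and> (j \<notin> {..N} \<longrightarrow> I j = (0::nat))}"
    by (rule finite_set_of_finite_funs) auto
qed

lemma finite_Ind_star: "finite (Ind_star N d)"
  using finite_mindices[of N d] unfolding Ind_star_def by (rule rev_finite_subset) auto

lemma mono_homogeneous: "I \<in> mindices N e \<Longrightarrow> mono N I (\<lambda>j. t * x j) = t ^ e * mono N I x"
  unfolding mono_def mindices_def by (auto simp: power_mult_distrib prod.distrib power_sum)

lemma eval_form_homogeneous: "eval_form N e c (\<lambda>j. t * x j) = t ^ e * eval_form N e c x"
  unfolding eval_form_def by (simp add: mono_homogeneous sum_distrib_left algebra_simps)

lemma polymap_less: "i < N \<Longrightarrow> polymap N d a x i = x i ^ d + (\<Sum>I\<in>Ind_star N d. a i I * mono N I x)"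
  unfolding polymap_def by simp

lemma polymap_last: "polymap N d a x N = x N ^ d"
  unfolding polymap_def by simp

lemma polymap_homogeneous: "polymap N d a (\<lambda>j. t * x j) = (\<lambda>j. t ^ d * polymap N d a x j)"
proof
  fix i
  have "mono N I (\<lambda>j. t * x j) = t ^ d * mono N I x" if "I \<in> Ind_star N d" for I
    using that mono_homogeneous unfolding Ind_star_def by blast
  then show "polymap N d a (\<lambda>j. t * x j) i = t ^ d * polymap N d a x i"
    unfolding polymap_def by (auto simp: power_mult_distrib sum_distrib_left algebra_simps intro!: sum.cong)
qed

lemma funpow_polymap_homogeneous:
  "(polymap N d a ^^ n) (\<lambda>j. t * x j) = (\<lambda>j. t ^ (d ^ n) * (polymap N d a ^^ n) x j)"
proof (induction n)
  case (Suc n)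
  have "(t ^ (d ^ n)) ^ d = t ^ (d ^ Suc n)"
    by (simp add: power_mult[symmetric] mult.commute)
  then show ?case
    by (simp add: Suc polymap_homogeneous)
qed simp

text \<open>The first \<open>N\<close> coordinates of \<open>f\<close> vanish at a point whose coordinates \<open>0..N\<close> all vanish:
  every monomial of \<open>Ind^*\<close> contains \<open>x\<^sub>N\<close>.\<close>
lemma polymap_less_eq_0:
  assumes "\<forall>j\<le>N. x j = 0" "i < N" "0 < d"
  shows "polymap N d a x i = 0"
proof -
  have "mono N I x = 0" if "I \<in> Ind_star N d" for I
    using that assms(1) unfolding mono_def Ind_star_def by (intro prod_zero) auto
  then show ?thesis
    using assms by (simp add: polymap_less)
qed

definition cone :: "(nat \<Rightarrow> 'k::field) set \<Rightarrow> bool" where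
  "cone Z \<longleftrightarrow> (\<forall>x\<in>Z. \<forall>t. t \<noteq> 0 \<longrightarrow> (\<lambda>j. t * x j) \<in> Z)"

lemma cone_zero_set: "cone (zero_set N e c)"
  unfolding cone_def zero_set_def pts_def by (simp add: eval_form_homogeneous)

lemma push_setI:
  "x \<in> Z \<Longrightarrow> t \<noteq> 0 \<Longrightarrow> y = (\<lambda>j. t * (polymap N d a ^^ n) x j) \<Longrightarrow> y \<in> push_set N d a n Z"
  unfolding push_set_def by blast

lemma push_setE:
  assumes "y \<in> push_set N d a n Z"
  obtains x t where "x \<in> Z" "t \<noteq> 0" "y = (\<lambda>j. t * (polymap N d a ^^ n) x j)"
  using assms unfolding push_set_def by blast

lemma push_set_0:
  assumes "cone Z"
  shows "push_set N d a 0 Z = Z"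
proof (intro set_eqI iffI)
  fix y
  assume "y \<in> push_set N d a 0 Z"
  then obtain x t where "x \<in> Z" "t \<noteq> 0" "y = (\<lambda>j. t * x j)"
    by (auto elim!: push_setE)
  then show "y \<in> Z"
    using assms unfolding cone_def by blast
next
  fix y
  assume "y \<in> Z"
  then show "y \<in> push_set N d a 0 Z"
    by (intro push_setI[of y _ 1]) auto
qed

lemma cone_push_set:
  fixes a :: "nat \<Rightarrow> (nat \<Rightarrow> nat) \<Rightarrow> 'k::field"
  shows "cone (push_set N d a n Z)"
  unfolding cone_def
proof (intro ballI allI impI)
  fix y and s :: 'k
  assume "y \<in> push_set N d a n Z" "s \<noteq> 0"
  then obtain x t where "x \<in> Z" "t \<noteq> 0" "y = (\<lambda>j. t * (polymap N d a ^^ n) x j)"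
    by (auto elim!: push_setE)
  with \<open>s \<noteq> 0\<close> show "(\<lambda>j. s * y j) \<in> push_set N d a n Z"
    by (intro push_setI[of x _ "s * t"]) (simp_all add: mult.assoc)
qed

lemma push_set_push_set: "push_set N d a m (push_set N d a n Z) = push_set N d a (m + n) Z"
proof (intro set_eqI iffI)
  fix y
  assume "y \<in> push_set N d a m (push_set N d a n Z)"
  then obtain z s where z: "z \<in> push_set N d a n Z" and s: "s \<noteq> 0"
    and y: "y = (\<lambda>j. s * (polymap N d a ^^ m) z j)"
    by (rule push_setE)
  from z obtain x t where x: "x \<in> Z" and t: "t \<noteq> 0"
    and z_eq: "z = (\<lambda>j. t * (polymap N d a ^^ n) x j)"
    by (rule push_setE)
  have "y = (\<lambda>j. (s * t ^ (d ^ m)) * (polymap N d a ^^ (m + n)) x j)"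
    unfolding y z_eq funpow_polymap_homogeneous funpow_add by (simp add: mult.assoc)
  then show "y \<in> push_set N d a (m + n) Z"
    using x s t by (intro push_setI) simp_all
next
  fix y
  assume "y \<in> push_set N d a (m + n) Z"
  then obtain x t where x: "x \<in> Z" and t: "t \<noteq> 0"
    and y: "y = (\<lambda>j. t * (polymap N d a ^^ (m + n)) x j)"
    by (rule push_setE)
  have "(\<lambda>j. 1 * (polymap N d a ^^ n) x j) \<in> push_set N d a n Z"
    using x by (intro push_setI) auto
  then show "y \<in> push_set N d a m (push_set N d a n Z)"
    by (rule push_setI[OF _ t]) (simp add: y funpow_add)
qed

lemma push_set_Suc: "push_set N d a (Suc n) Z = push_set N d a 1 (push_set N d a n Z)"
  using push_set_push_set[of N d a 1 n Z] by simp

context nonarch_valued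
begin

lemma cone_normalize:
  assumes "cone Z" "x \<in> Z" "\<exists>j\<le>N. x j \<noteq> 0"
  obtains u k where "u \<noteq> 0" "(\<lambda>j. u * x j) \<in> Z" "k \<le> N" "av (u * x k) = 1"
    "\<forall>j\<le>N. av (u * x j) \<le> 1"
proof -
  obtain k where k: "k \<le> N" and k_max: "\<forall>j\<le>N. av (x j) \<le> av (x k)"
    using Max_in[of "av ` x ` {..N}"] Max_ge[of "av ` x ` {..N}"] by fastforce
  have "x k \<noteq> 0"
    using assms(3) k_max av_nonneg by (metis av_eq_0_iff order_antisym)
  then have "0 < av (x k)"
    using av_nonneg[of "x k"] av_eq_0_iff by (metis less_eq_real_def)
  show thesis
  proof
    show "inverse (x k) \<noteq> 0" "(\<lambda>j. inverse (x k) * x j) \<in> Z"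
      using assms(1,2) \<open>x k \<noteq> 0\<close> unfolding cone_def by simp_all
    show "k \<le> N" "av (inverse (x k) * x k) = 1"
      using k \<open>x k \<noteq> 0\<close> by simp_all
    show "\<forall>j\<le>N. av (inverse (x k) * x j) \<le> 1"
      using k_max \<open>0 < av (x k)\<close> by (simp add: field_simps)
  qed
qed

end

lemma logplus_nonneg: "0 \<le> logplus x"
  unfolding logplus_def by simp

lemma logplus_mono: "x \<le> y \<Longrightarrow> logplus x \<le> logplus y"
  unfolding logplus_def by auto

lemma le_exp_logplus: "x \<le> exp (logplus x)"
  unfolding logplus_def by auto

lemma logplus_max: "logplus (max x y) = max (logplus x) (logplus y)"
  by (metis logplus_mono max_of_mono monoI)

lemma logplus_power:
  assumes "0 \<le> x"
  shows "logplus (x ^ n) = real n * logplus x"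
proof (cases "x \<le> 1")
  case True
  then show ?thesis
    using assms power_le_one[of x n] unfolding logplus_def by simp
next
  case False
  then show ?thesis
    using one_less_power[of x n] unfolding logplus_def by (cases "n = 0") (auto simp: ln_realpow not_le)
qed

lemma logplus_exp: "0 \<le> B \<Longrightarrow> logplus (exp B) = B"
  unfolding logplus_def by auto

definition lambda_set :: "nat \<Rightarrow> ('k::field \<Rightarrow> real) \<Rightarrow> (nat \<Rightarrow> 'k) set \<Rightarrow> real set" where
  "lambda_set N av Z = {inverse (av (b N)) | b. b \<in> Z \<and> (\<forall>i<N. av (b i) = 1)}"

text \<open>\<open>Sup\<close> of an unbounded set of reals is a junk value, hence the \<open>bdd_above\<close>
  hypotheses below.\<close>
definition lambda_sup :: "nat \<Rightarrow> ('k::field \<Rightarrow> real) \<Rightarrow> (nat \<Rightarrow> 'k) set \<Rightarrow> real" where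
  "lambda_sup N av Z = Sup ({0} \<union> lambda_set N av Z)"

lemma lambda_v_eq_logplus_lambda_sup: "lambda_v N av Z = logplus (lambda_sup N av Z)"
  unfolding lambda_v_def lambda_sup_def lambda_set_def ..

lemma lambda_setI: "b \<in> Z \<Longrightarrow> \<forall>i<N. av (b i) = 1 \<Longrightarrow> inverse (av (b N)) \<in> lambda_set N av Z"
  unfolding lambda_set_def by blast

lemma lambda_sup_nonneg: "bdd_above (lambda_set N av Z) \<Longrightarrow> 0 \<le> lambda_sup N av Z"
  unfolding lambda_sup_def by (intro cSup_upper) auto

lemma lambda_sup_upper: "bdd_above (lambda_set N av Z) \<Longrightarrow> s \<in> lambda_set N av Z \<Longrightarrow> s \<le> lambda_sup N av Z"
  unfolding lambda_sup_def by (intro cSup_upper) auto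

lemma lambda_sup_least: "\<forall>s\<in>lambda_set N av Z. s \<le> R \<Longrightarrow> 0 \<le> R \<Longrightarrow> lambda_sup N av Z \<le> R"
  unfolding lambda_sup_def by (intro cSup_least) auto

section \<open>One iteration of \<open>f\<close>\<close>

locale polymap_bounded = nonarch_valued av
  for av :: "'k::field \<Rightarrow> real" +
  fixes N d :: nat and a :: "nat \<Rightarrow> (nat \<Rightarrow> nat) \<Rightarrow> 'k" and B :: real
  assumes coeff_bound: "\<forall>i<N. \<forall>I\<in>Ind_star N d. av (a i I) \<le> exp B ^ I N"
    and B_nonneg: "0 \<le> B" and N_pos: "0 < N" and d_pos: "0 < d"
begin

lemma av_perturbation_term_le:
  assumes "\<forall>j\<le>N. av (x j) \<le> 1" "i < N" "I \<in> Ind_star N d"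
  shows "av (a i I * mono N I x) \<le> (exp B * av (x N)) ^ I N"
proof -
  have "av (a i I) * av (mono N I x) \<le> exp B ^ I N * av (x N) ^ I N"
    using coeff_bound assms av_mono_le[OF assms(1)] av_nonneg by (intro mult_mono) auto
  then show ?thesis
    by (simp add: power_mult_distrib)
qed

lemma av_perturbation_less_1:
  assumes "\<forall>j\<le>N. av (x j) \<le> 1" "i < N" "exp B * av (x N) < 1"
  shows "av (\<Sum>I\<in>Ind_star N d. a i I * mono N I x) < 1"
proof (rule av_sum_less)
  fix I
  assume I: "I \<in> Ind_star N d"
  then have "0 < I N"
    unfolding Ind_star_def by simp
  then have "(exp B * av (x N)) ^ I N < 1"
    using assms(3) av_nonneg by (simp add: power_less_one_iff)
  then show "av (a i I * mono N I x) < 1"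
    using av_perturbation_term_le[OF assms(1,2) I] by linarith
qed simp

lemma av_perturbation_le:
  assumes "\<forall>j\<le>N. av (x j) \<le> 1" "i < N" "1 \<le> exp B * av (x N)"
  shows "av (\<Sum>I\<in>Ind_star N d. a i I * mono N I x) \<le> (exp B * av (x N)) ^ d"
proof (rule av_sum_le)
  fix I
  assume I: "I \<in> Ind_star N d"
  then have "(exp B * av (x N)) ^ I N \<le> (exp B * av (x N)) ^ d"
    using assms(3) by (intro power_increasing) (auto simp: Ind_star_def)
  then show "av (a i I * mono N I x) \<le> (exp B * av (x N)) ^ d"
    using av_perturbation_term_le[OF assms(1,2) I] by linarith
qed (use assms(3) in simp)

text \<open>Near the hyperplane \<open>x\<^sub>N = 0\<close> the coordinate \<open>f\<^sub>i\<close> is dominated by \<open>x\<^sub>i\<^sup>d\<close>.\<close>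
lemma av_polymap_eq_1_iff:
  assumes "\<forall>j\<le>N. av (x j) \<le> 1" "exp B * av (x N) < 1" "i < N"
  shows "av (polymap N d a x i) = 1 \<longleftrightarrow> av (x i) = 1"
proof -
  have small: "av (\<Sum>I\<in>Ind_star N d. a i I * mono N I x) < 1"
    using av_perturbation_less_1[OF assms(1,3,2)] .
  show ?thesis
  proof
    assume "av (x i) = 1"
    then show "av (polymap N d a x i) = 1"
      using av_add_eq_of_less[of _ "x i ^ d"] small assms(3) by (simp add: polymap_less)
  next
    assume "av (polymap N d a x i) = 1"
    show "av (x i) = 1"
    proof (rule ccontr)
      assume "av (x i) \<noteq> 1"
      moreover have "av (x i) \<le> 1"
        using assms(1,3) by simp
      ultimately have "av (x i) < 1"
        by simp
      then have "av (x i) ^ d < 1"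
        using av_nonneg d_pos by (simp add: power_less_one_iff)
      then have "av (polymap N d a x i) < 1"
        using small assms(3) le_less_trans[OF av_add_le_max] by (simp add: polymap_less)
      with \<open>av (polymap N d a x i) = 1\<close> show False
        by simp
    qed
  qed
qed

lemma inverse_av_polymap_last_le_of_large:
  assumes le_1: "\<forall>j\<le>N. av (x j) \<le> 1" and large: "1 \<le> exp B * av (x N)"
    and unit: "av (t * polymap N d a x 0) = 1"
  shows "inverse (av (t * polymap N d a x N)) \<le> exp B ^ d"
proof -
  have "av (x 0 ^ d) \<le> (exp B * av (x N)) ^ d"
    using le_1 large av_nonneg by (simp add: power_le_one order_trans[OF _ one_le_power])
  moreover have "av (\<Sum>I\<in>Ind_star N d. a 0 I * mono N I x) \<le> (exp B * av (x N)) ^ d"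
    using av_perturbation_le[OF le_1 N_pos large] .
  ultimately have "av (polymap N d a x 0) \<le> (exp B * av (x N)) ^ d"
    using N_pos order_trans[OF av_add_le_max] by (simp add: polymap_less)
  then have "1 \<le> av t * (exp B * av (x N)) ^ d"
    using unit av_nonneg by (metis av_mult mult_left_mono)
  then have "1 \<le> av (t * polymap N d a x N) * exp B ^ d"
    by (simp add: polymap_last power_mult_distrib algebra_simps)
  moreover from this have "0 < av (t * polymap N d a x N)"
    by (metis av_nonneg less_eq_real_def mult_zero_left not_one_le_zero)
  ultimately show ?thesis
    by (simp add: field_simps)
qed

lemma inverse_av_polymap_last_le_of_small:
  assumes x: "x \<in> Z" and le_1: "\<forall>j\<le>N. av (x j) \<le> 1" and k: "k \<le> N" "av (x k) = 1"
    and unit: "\<forall>i<N. av (t * polymap N d a x i) = 1"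
    and small: "exp B * av (x N) < 1"
    and bound: "\<forall>s\<in>lambda_set N av Z. s \<le> R"
  shows "inverse (av (t * polymap N d a x N)) \<le> R ^ d"
proof -
  have "k \<noteq> N"
    using k small B_nonneg by auto
  then have "av (polymap N d a x k) = 1"
    using av_polymap_eq_1_iff[OF le_1 small] k by simp
  moreover have "k < N"
    using k \<open>k \<noteq> N\<close> by simp
  ultimately have "av t = 1"
    using unit[rule_format, OF \<open>k < N\<close>] by simp
  then have "\<forall>i<N. av (x i) = 1"
    using unit av_polymap_eq_1_iff[OF le_1 small] by simp
  then have "inverse (av (x N)) \<le> R"
    using bound lambda_setI[OF x] by blast
  then have "inverse (av (x N)) ^ d \<le> R ^ d"
    using av_nonneg by (simp add: power_mono)
  then show ?thesis
    using \<open>av t = 1\<close> by (simp add: polymap_last power_inverse)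
qed

text \<open>A preimage normalised by its largest coordinate either has a large last coordinate, and
  then the unit coordinate \<open>t f\<^sub>0\<close> forces \<open>|t f\<^sub>N| \<ge> e\<^sup>-\<^sup>d\<^sup>B\<close>, or it lies near \<open>x\<^sub>N = 0\<close>, where \<open>f\<close>
  preserves normalisation.\<close>
lemma lambda_set_push_le:
  assumes cone: "cone Z" and bound: "\<forall>s\<in>lambda_set N av Z. s \<le> R"
  shows "\<forall>s\<in>lambda_set N av (push_set N d a 1 Z). s \<le> max (R ^ d) (exp B ^ d)"
proof
  fix s
  assume "s \<in> lambda_set N av (push_set N d a 1 Z)"
  then obtain x t where x: "x \<in> Z" and "t \<noteq> 0"
    and unit: "\<forall>i<N. av (t * polymap N d a x i) = 1"
    and s: "s = inverse (av (t * polymap N d a x N))"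
    unfolding lambda_set_def push_set_def by auto
  have "\<exists>j\<le>N. x j \<noteq> 0"
  proof (rule ccontr)
    assume "\<not> (\<exists>j\<le>N. x j \<noteq> 0)"
    then have "polymap N d a x 0 = 0"
      using N_pos d_pos by (intro polymap_less_eq_0) auto
    then show False
      using unit N_pos by auto
  qed
  then obtain u k where "u \<noteq> 0" and x': "(\<lambda>j. u * x j) \<in> Z" and k: "k \<le> N" "av (u * x k) = 1"
    and le_1: "\<forall>j\<le>N. av (u * x j) \<le> 1"
    using cone_normalize[OF cone x] by blast
  define t' where "t' = t * inverse u ^ d"
  have rescale: "t' * polymap N d a (\<lambda>j. u * x j) i = t * polymap N d a x i" for i
    using \<open>u \<noteq> 0\<close> unfolding t'_def polymap_homogeneous
    by (simp add: power_mult_distrib[symmetric])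
  have "inverse (av (t' * polymap N d a (\<lambda>j. u * x j) N)) \<le> max (R ^ d) (exp B ^ d)"
  proof (cases "1 \<le> exp B * av (u * x N)")
    case True
    have "av (t' * polymap N d a (\<lambda>j. u * x j) 0) = 1"
      unfolding rescale using unit N_pos by simp
    then have "inverse (av (t' * polymap N d a (\<lambda>j. u * x j) N)) \<le> exp B ^ d"
      by (rule inverse_av_polymap_last_le_of_large[OF le_1 True])
    then show ?thesis
      by simp
  next
    case False
    have "\<forall>i<N. av (t' * polymap N d a (\<lambda>j. u * x j) i) = 1"
      unfolding rescale using unit by simp
    then have "inverse (av (t' * polymap N d a (\<lambda>j. u * x j) N)) \<le> R ^ d"
      using False by (intro inverse_av_polymap_last_le_of_small[OF x' le_1 k _ _ bound]) simp_all
    then show ?thesis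
      by simp
  qed
  then show "s \<le> max (R ^ d) (exp B ^ d)"
    using s rescale by simp
qed

lemma inverse_power_mem_lambda_set_push:
  assumes b: "b \<in> Z" "\<forall>i<N. av (b i) = 1" and small: "exp B * av (b N) < 1"
  shows "inverse (av (b N)) ^ d \<in> lambda_set N av (push_set N d a 1 Z)"
proof -
  have "av (b N) \<le> exp B * av (b N)"
    using B_nonneg av_nonneg[of "b N"] by (simp add: mult_le_cancel_right1)
  then have "av (b N) \<le> 1"
    using small by simp
  have le_1: "\<forall>j\<le>N. av (b j) \<le> 1"
  proof (intro allI impI)
    fix j
    assume "j \<le> N"
    then show "av (b j) \<le> 1"
      using b(2) \<open>av (b N) \<le> 1\<close> by (cases "j = N") auto
  qed
  have "polymap N d a b \<in> push_set N d a 1 Z"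
    using b(1) by (intro push_setI[of b _ 1]) auto
  moreover have "\<forall>i<N. av (polymap N d a b i) = 1"
    using av_polymap_eq_1_iff[OF le_1 small] b(2) by simp
  ultimately have "inverse (av (polymap N d a b N)) \<in> lambda_set N av (push_set N d a 1 Z)"
    by (rule lambda_setI)
  then show ?thesis
    by (simp add: polymap_last power_inverse)
qed

lemma lambda_set_push_le_lambda_sup:
  assumes "cone Z" "bdd_above (lambda_set N av Z)"
  shows "\<forall>s\<in>lambda_set N av (push_set N d a 1 Z). s \<le> max (lambda_sup N av Z ^ d) (exp B ^ d)"
  using lambda_set_push_le[OF assms(1)] lambda_sup_upper[OF assms(2)] by blast

lemma bdd_above_lambda_set_push:
  assumes "cone Z" "bdd_above (lambda_set N av Z)"
  shows "bdd_above (lambda_set N av (push_set N d a 1 Z))"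
  using lambda_set_push_le_lambda_sup[OF assms] unfolding bdd_above_def by blast

lemma lambda_sup_push_ge:
  assumes "cone Z" "bdd_above (lambda_set N av Z)" "exp B < lambda_sup N av Z"
  shows "lambda_sup N av Z ^ d \<le> lambda_sup N av (push_set N d a 1 Z)"
proof -
  define L' where "L' = lambda_sup N av (push_set N d a 1 Z)"
  have "0 \<le> L'"
    unfolding L'_def using bdd_above_lambda_set_push[OF assms(1,2)] by (rule lambda_sup_nonneg)
  have "s \<le> root d L'" if s: "s \<in> lambda_set N av Z" "exp B < s" for s
  proof -
    obtain b where b: "b \<in> Z" "\<forall>i<N. av (b i) = 1" and s_eq: "s = inverse (av (b N))"
      using s(1) unfolding lambda_set_def by blast
    have "0 < s"
      using s(2) exp_gt_zero less_trans by blast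
    then have "exp B * av (b N) < 1"
      using s(2) s_eq av_nonneg[of "b N"] by (simp add: field_simps)
    then have "s ^ d \<in> lambda_set N av (push_set N d a 1 Z)"
      unfolding s_eq by (rule inverse_power_mem_lambda_set_push[OF b])
    then have "s ^ d \<le> L'"
      unfolding L'_def by (rule lambda_sup_upper[OF bdd_above_lambda_set_push[OF assms(1,2)]])
    then show ?thesis
      using \<open>0 < s\<close> d_pos real_root_le_mono[of d "s ^ d" L'] by (simp add: real_root_power_cancel)
  qed
  then have "\<forall>s\<in>lambda_set N av Z. s \<le> max (exp B) (root d L')"
    by (meson le_max_iff_disj not_le)
  then have "lambda_sup N av Z \<le> max (exp B) (root d L')"
    by (rule lambda_sup_least) (simp add: le_max_iff_disj)
  then have "lambda_sup N av Z \<le> root d L'"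
    using assms(3) by simp
  then have "lambda_sup N av Z ^ d \<le> root d L' ^ d"
    using lambda_sup_nonneg[OF assms(2)] by (rule power_mono)
  then show ?thesis
    using \<open>0 \<le> L'\<close> d_pos unfolding L'_def by simp
qed

lemma lambda_v_push_le:
  assumes "cone Z" "bdd_above (lambda_set N av Z)"
  shows "lambda_v N av (push_set N d a 1 Z) \<le> real d * max (lambda_v N av Z) B"
proof -
  have "lambda_sup N av (push_set N d a 1 Z) \<le> max (lambda_sup N av Z ^ d) (exp B ^ d)"
    using lambda_set_push_le_lambda_sup[OF assms] by (rule lambda_sup_least) (simp add: le_max_iff_disj)
  then have "lambda_v N av (push_set N d a 1 Z) \<le> logplus (max (lambda_sup N av Z ^ d) (exp B ^ d))"
    unfolding lambda_v_eq_logplus_lambda_sup by (rule logplus_mono)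
  also have "\<dots> = real d * max (lambda_v N av Z) B"
    using lambda_sup_nonneg[OF assms(2)] B_nonneg
    by (simp add: logplus_max logplus_power logplus_exp lambda_v_eq_logplus_lambda_sup
        max_mult_distrib_left)
  finally show ?thesis .
qed

lemma lambda_v_push_eq:
  assumes "cone Z" "bdd_above (lambda_set N av Z)" "B < lambda_v N av Z"
  shows "lambda_v N av (push_set N d a 1 Z) = real d * lambda_v N av Z"
proof -
  have "1 < lambda_sup N av Z" "B < ln (lambda_sup N av Z)"
    using assms(3) B_nonneg unfolding lambda_v_eq_logplus_lambda_sup logplus_def
    by (auto split: if_splits)
  then have "exp B < lambda_sup N av Z"
    by (metis exp_less_cancel_iff exp_ln less_trans zero_less_one)
  then have "logplus (lambda_sup N av Z ^ d) \<le> logplus (lambda_sup N av (push_set N d a 1 Z))"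
    using assms(1,2) by (intro logplus_mono lambda_sup_push_ge)
  then have "real d * lambda_v N av Z \<le> lambda_v N av (push_set N d a 1 Z)"
    using lambda_sup_nonneg[OF assms(2)] by (simp add: lambda_v_eq_logplus_lambda_sup logplus_power)
  moreover have "lambda_v N av (push_set N d a 1 Z) \<le> real d * lambda_v N av Z"
    using lambda_v_push_le[OF assms(1,2)] assms(3) by simp
  ultimately show ?thesis
    by simp
qed

end

section \<open>Sequences with an escape threshold\<close>

locale escape_sequence =
  fixes l :: "nat \<Rightarrow> real" and B :: real and d :: nat
  assumes d_ge_2: "2 \<le> d" and threshold_nonneg: "0 \<le> B" and l_nonneg: "0 \<le> l n"
    and l_Suc_le: "l (Suc n) \<le> real d * max (l n) B"
    and l_Suc_eq: "B < l n \<Longrightarrow> l (Suc n) = real d * l n"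
begin

lemma l_add_eq_of_escape:
  assumes "B < l m"
  shows "l (m + k) = real d ^ k * l m"
proof (induction k)
  case (Suc k)
  have "1 * l m \<le> real d ^ k * l m"
    using d_ge_2 l_nonneg by (intro mult_right_mono one_le_power) auto
  then have "B < l (m + k)"
    using Suc assms by simp
  then show ?case
    using Suc l_Suc_eq by simp
qed simp

lemma scaled_tendsto_of_escape:
  assumes "B < l m"
  shows "(\<lambda>n. l n / real d ^ n) \<longlonglongrightarrow> l m / real d ^ m"
proof (rule LIMSEQ_offset[where k = m])
  have "l (n + m) / real d ^ (n + m) = l m / real d ^ m" for n
    using l_add_eq_of_escape[OF assms, of n] d_ge_2 by (simp add: add.commute power_add)
  then show "(\<lambda>n. l (n + m) / real d ^ (n + m)) \<longlonglongrightarrow> l m / real d ^ m"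
    by simp
qed

lemma scaled_tendsto_0_of_no_escape:
  assumes "\<forall>n. l n \<le> B"
  shows "(\<lambda>n. l n / real d ^ n) \<longlonglongrightarrow> 0"
proof (rule tendsto_sandwich[of "\<lambda>n. 0" _ _ "\<lambda>n. B * (1 / real d) ^ n"])
  show "\<forall>\<^sub>F n in sequentially. 0 \<le> l n / real d ^ n"
    using l_nonneg by simp
  show "\<forall>\<^sub>F n in sequentially. l n / real d ^ n \<le> B * (1 / real d) ^ n"
    using assms d_ge_2 by (simp add: power_divide divide_right_mono)
  have "(\<lambda>n. (1 / real d) ^ n) \<longlonglongrightarrow> 0"
    using d_ge_2 by (intro LIMSEQ_power_zero) simp
  then show "(\<lambda>n. B * (1 / real d) ^ n) \<longlonglongrightarrow> 0"
    by (rule tendsto_mult_right_zero)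
qed simp

lemma convergent_scaled: "convergent (\<lambda>n. l n / real d ^ n)"
  using scaled_tendsto_of_escape scaled_tendsto_0_of_no_escape
  unfolding convergent_def by (meson not_le)

lemma lim_scaled_of_escape: "B < l 0 \<Longrightarrow> lim (\<lambda>n. l n / real d ^ n) = l 0"
  using scaled_tendsto_of_escape[of 0] by (simp add: limI)

text \<open>If \<open>l\<close> first exceeds \<open>B\<close> at \<open>m > 0\<close>, then \<open>l m \<le> d B\<close>, so the limit \<open>l m / d\<^sup>m\<close> is at most \<open>B\<close>.\<close>
lemma lim_scaled_le_of_no_escape_at_0:
  assumes "l 0 \<le> B"
  shows "lim (\<lambda>n. l n / real d ^ n) \<le> B"
proof (cases "\<exists>m. B < l m")
  case True
  define m where "m = (LEAST m. B < l m)"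
  have "B < l m"
    unfolding m_def using True by (rule LeastI_ex)
  then obtain p where p: "m = Suc p"
    using assms by (cases m) auto
  then have "l p \<le> B"
    using not_less_Least[of p "\<lambda>m. B < l m"] unfolding m_def by simp
  then have "l m \<le> real d * B"
    using l_Suc_le[of p] p by simp
  also have "\<dots> \<le> real d ^ m * B"
    using p d_ge_2 threshold_nonneg by (intro mult_right_mono) (simp_all add: power_increasing)
  finally have "l m / real d ^ m \<le> B"
    using d_ge_2 by (simp add: divide_le_eq mult.commute)
  then show ?thesis
    using scaled_tendsto_of_escape[OF \<open>B < l m\<close>] by (simp add: limI)
next
  case False
  then show ?thesis
    using scaled_tendsto_0_of_no_escape threshold_nonneg by (simp add: limI not_less)
qed

lemma lim_scaled_nonneg: "0 \<le> lim (\<lambda>n. l n / real d ^ n)"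
  using convergent_scaled l_nonneg
  by (intro LIMSEQ_le_const[of "\<lambda>n. l n / real d ^ n"]) (auto simp: convergent_LIMSEQ_iff)

lemma abs_lim_scaled_diff_le: "\<bar>lim (\<lambda>n. l n / real d ^ n) - l 0\<bar> \<le> B"
  using lim_scaled_of_escape lim_scaled_le_of_no_escape_at_0 lim_scaled_nonneg l_nonneg[of 0]
    threshold_nonneg
  by (cases "B < l 0") auto

lemma lim_scaled_Suc: "lim (\<lambda>n. l (Suc n) / real d ^ n) = real d * lim (\<lambda>n. l n / real d ^ n)"
proof -
  have "(\<lambda>n. l (Suc n) / real d ^ Suc n) \<longlonglongrightarrow> lim (\<lambda>n. l n / real d ^ n)"
    using convergent_scaled by (intro LIMSEQ_Suc) (simp add: convergent_LIMSEQ_iff)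
  then have "(\<lambda>n. real d * (l (Suc n) / real d ^ Suc n)) \<longlonglongrightarrow> real d * lim (\<lambda>n. l n / real d ^ n)"
    by (rule tendsto_mult_left)
  moreover have "real d * (l (Suc n) / real d ^ Suc n) = l (Suc n) / real d ^ n" for n
    using d_ge_2 by simp
  ultimately show ?thesis
    by (simp add: limI)
qed

text \<open>Once \<open>l\<close> exceeds \<open>B\<close> it grows geometrically, which a finite range forbids.\<close>
lemma lim_scaled_eq_0_of_finite_range:
  assumes "finite (range l)"
  shows "lim (\<lambda>n. l n / real d ^ n) = 0"
proof -
  have "l m \<le> B" for m
  proof (rule ccontr)
    assume "\<not> l m \<le> B"
    then have "0 < l m"
      using threshold_nonneg by simp
    obtain k where "Max (range l) / l m < real d ^ k"
      using real_arch_pow[of "real d" "Max (range l) / l m"] d_ge_2 by auto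
    moreover have "l (m + k) = real d ^ k * l m"
      using \<open>\<not> l m \<le> B\<close> by (intro l_add_eq_of_escape) simp
    ultimately have "Max (range l) < l (m + k)"
      using \<open>0 < l m\<close> by (simp add: field_simps)
    moreover have "l (m + k) \<le> Max (range l)"
      using assms by (intro Max_ge) auto
    ultimately show False
      by simp
  qed
  then show ?thesis
    using scaled_tendsto_0_of_no_escape by (simp add: limI)
qed

end

context nonarch_valued
begin

lemma coeff_le_exp_B_v:
  assumes "i < N" "I \<in> Ind_star N d"
  shows "av (a i I) \<le> exp (B_v N d av a) ^ I N"
proof -
  define S where "S = {av (a i I) powr (1 / real (I N)) | i I. i < N \<and> I \<in> Ind_star N d}"
  have "S = (\<lambda>(i, I). av (a i I) powr (1 / real (I N))) ` ({..<N} \<times> Ind_star N d)"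
    unfolding S_def by auto
  then have "finite S"
    using finite_Ind_star by simp
  moreover have "av (a i I) powr (1 / real (I N)) \<in> S"
    unfolding S_def using assms by blast
  ultimately have "av (a i I) powr (1 / real (I N)) \<le> Max S"
    by (rule Max_ge)
  then have "av (a i I) powr (1 / real (I N)) \<le> exp (B_v N d av a)"
    unfolding B_v_def S_def[symmetric] using le_exp_logplus order_trans by blast
  then have "(av (a i I) powr (1 / real (I N))) ^ I N \<le> exp (B_v N d av a) ^ I N"
    by (intro power_mono) simp_all
  moreover have "(av (a i I) powr (1 / real (I N))) ^ I N = av (a i I)"
  proof (cases "a i I = 0")
    case True
    with assms(2) show ?thesis
      unfolding Ind_star_def by simp
  next
    case False
    then have "0 < av (a i I)"
      using av_nonneg[of "a i I"] by (metis av_eq_0_iff less_eq_real_def)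
    then have "(av (a i I) powr (1 / real (I N))) ^ I N
        = (av (a i I) powr (1 / real (I N))) powr real (I N)"
      using False powr_realpow[of "av (a i I) powr (1 / real (I N))" "I N"] by simp
    also have "\<dots> = av (a i I)"
      using assms(2) \<open>0 < av (a i I)\<close> unfolding Ind_star_def by (simp add: powr_powr)
    finally show ?thesis .
  qed
  ultimately show ?thesis
    by simp
qed

text \<open>The normal form of \<open>F\<^sub>D\<close> on \<open>x\<^sub>N = 0\<close> makes \<open>\<Prod>\<^sub>i x\<^sub>i\<^sup>e\<^sup>\<^sub>i\<close> the dominant monomial
  at normalised points close to that hyperplane.\<close>
lemma av_eval_form_eq_1:
  assumes D: "Div_star_form N e c" and unit: "\<forall>i<N. av (b i) = 1"
    and coeff: "\<forall>I\<in>mindices N e. av (c I) \<le> M" and small: "M * av (b N) < 1"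
  shows "av (eval_form N e c b) = 1"
proof -
  obtain E where E: "\<forall>j\<ge>N. E j = 0" "sum E {..<N} = e"
    and c_E: "\<forall>I. I N = 0 \<longrightarrow> c I = (if I = E then 1 else 0)"
    using D unfolding Div_star_form_def by blast
  have E_mem: "E \<in> mindices N e"
    unfolding mindices_def using E by (simp add: lessThan_Suc_atMost[symmetric])
  have "c E = 1"
    using c_E E(1) by simp
  then have "1 \<le> M"
    using coeff E_mem by force
  then have "av (b N) \<le> M * av (b N)"
    using av_nonneg[of "b N"] by (simp add: mult_le_cancel_right1)
  then have "av (b N) < 1"
    using small by simp
  have "av (\<Sum>I\<in>mindices N e - {E}. c I * mono N I b) < 1"
  proof (rule av_sum_less)
    fix I
    assume I: "I \<in> mindices N e - {E}"
    show "av (c I * mono N I b) < 1"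
    proof (cases "I N = 0")
      case True
      then show ?thesis
        using c_E I by auto
    next
      case False
      then have "av (b N) ^ I N \<le> av (b N)"
        using \<open>av (b N) < 1\<close> av_nonneg power_decreasing[of 1 "I N" "av (b N)"] by simp
      then have "av (c I) * av (b N) ^ I N \<le> M * av (b N)"
        using coeff I av_nonneg \<open>1 \<le> M\<close> by (intro mult_mono) auto
      then show ?thesis
        using small av_mono_of_units[OF unit] by simp
    qed
  qed simp
  moreover have "av (c E * mono N E b) = 1"
    using \<open>c E = 1\<close> av_mono_of_units[OF unit] E(1) by simp
  ultimately show ?thesis
    unfolding eval_form_def sum.remove[OF finite_mindices E_mem]
    by (metis av_add_eq_of_less)
qed

lemma bdd_above_lambda_set_zero_set:
  assumes D: "Div_star_form N e c"
  shows "bdd_above (lambda_set N av (zero_set N e c))"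
proof -
  define M where "M = (\<Sum>I\<in>mindices N e. av (c I))"
  have coeff: "\<forall>I\<in>mindices N e. av (c I) \<le> M"
    unfolding M_def using finite_mindices by (auto intro!: member_le_sum av_nonneg)
  have "s \<le> M" if s_mem: "s \<in> lambda_set N av (zero_set N e c)" for s
  proof (rule ccontr)
    assume "\<not> s \<le> M"
    obtain b where b: "b \<in> zero_set N e c" "\<forall>i<N. av (b i) = 1" and s: "s = inverse (av (b N))"
      using s_mem unfolding lambda_set_def by blast
    have "0 \<le> M"
      unfolding M_def using av_nonneg by (simp add: sum_nonneg)
    have "M < inverse (av (b N))"
      using \<open>\<not> s \<le> M\<close> s by simp
    moreover from this have "0 < av (b N)"
      using \<open>0 \<le> M\<close> by (metis inverse_positive_iff_positive le_less_trans)
    ultimately have "M * av (b N) < 1"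
      by (simp add: field_simps)
    then have "av (eval_form N e c b) = 1"
      using av_eval_form_eq_1[OF D b(2) coeff] by simp
    with b(1) show False
      unfolding zero_set_def by simp
  qed
  then show ?thesis
    unfolding bdd_above_def by blast
qed

end

lemma polymap_bounded_B_v:
  assumes "nonarch_abs av" "0 < N" "0 < d"
  shows "polymap_bounded av N d a (B_v N d av a)"
proof -
  interpret nonarch_valued av
    using assms(1) by unfold_locales
  show ?thesis
    using assms coeff_le_exp_B_v unfolding B_v_def
    by unfold_locales (simp_all add: logplus_nonneg)
qed

context polymap_bounded
begin

lemma escape_sequence_lambda_v:
  assumes "2 \<le> d" "cone Z" "bdd_above (lambda_set N av Z)"
  shows "escape_sequence (\<lambda>n. lambda_v N av (push_set N d a n Z)) B d"
proof -
  have bdd: "bdd_above (lambda_set N av (push_set N d a n Z))" for n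
  proof (induction n)
    case 0
    then show ?case
      using assms(2,3) by (simp add: push_set_0)
  next
    case (Suc n)
    show ?case
      unfolding push_set_Suc by (rule bdd_above_lambda_set_push[OF cone_push_set Suc.IH])
  qed
  show ?thesis
  proof
    show "0 \<le> lambda_v N av (push_set N d a n Z)" for n
      unfolding lambda_v_def by (rule logplus_nonneg)
    show "lambda_v N av (push_set N d a (Suc n) Z)
        \<le> real d * max (lambda_v N av (push_set N d a n Z)) B" for n
      unfolding push_set_Suc using cone_push_set bdd by (rule lambda_v_push_le)
    show "lambda_v N av (push_set N d a (Suc n) Z) = real d * lambda_v N av (push_set N d a n Z)"
      if "B < lambda_v N av (push_set N d a n Z)" for n
      unfolding push_set_Suc using cone_push_set bdd that by (rule lambda_v_push_eq)
  qed (use assms(1) B_nonneg in simp_all)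
qed

lemma G_v_properties:
  assumes "2 \<le> d" "cone Z" "bdd_above (lambda_set N av Z)"
  shows "convergent (G_seq N d av a Z)"
    and "G_v N d av a (push_set N d a 1 Z) = real d * G_v N d av a Z"
    and "preperiodic N d a Z \<Longrightarrow> G_v N d av a Z = 0"
    and "B < lambda_v N av Z \<Longrightarrow> G_v N d av a Z = lambda_v N av Z"
    and "\<bar>G_v N d av a Z - lambda_v N av Z\<bar> \<le> B"
proof -
  interpret escape_sequence "\<lambda>n. lambda_v N av (push_set N d a n Z)" B d
    using assms by (rule escape_sequence_lambda_v)
  have G_push: "G_seq N d av a (push_set N d a 1 Z)
      = (\<lambda>n. lambda_v N av (push_set N d a (Suc n) Z) / real d ^ n)"
    unfolding G_seq_def push_set_push_set by simp
  have Z: "push_set N d a 0 Z = Z"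
    using assms(2) by (rule push_set_0)
  show "convergent (G_seq N d av a Z)"
    unfolding G_seq_def by (rule convergent_scaled)
  show "G_v N d av a (push_set N d a 1 Z) = real d * G_v N d av a Z"
    unfolding G_v_def G_push using lim_scaled_Suc unfolding G_seq_def .
  show "G_v N d av a Z = 0" if "preperiodic N d a Z"
  proof -
    have "finite (lambda_v N av ` range (\<lambda>n. push_set N d a n Z))"
      using that unfolding preperiodic_def by (rule finite_imageI)
    then show ?thesis
      unfolding G_v_def G_seq_def by (intro lim_scaled_eq_0_of_finite_range) (simp add: image_image)
  qed
  show "B < lambda_v N av Z \<Longrightarrow> G_v N d av a Z = lambda_v N av Z"
    using lim_scaled_of_escape unfolding G_v_def G_seq_def Z .
  show "\<bar>G_v N d av a Z - lambda_v N av Z\<bar> \<le> B"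
    using abs_lim_scaled_diff_le unfolding G_v_def G_seq_def Z .
qed

end

theorem lemma3p3:
  fixes av :: "'k::field \<Rightarrow> real"
    and N d :: nat
    and a :: "nat \<Rightarrow> (nat \<Rightarrow> nat) \<Rightarrow> 'k"
  assumes "N \<ge> 1" and "d \<ge> 2"
    and "alg_closed TYPE('k)"
    and "nonarch_abs av" and "nontrivial_abs av" and "complete_abs av"
    and "CHAR('k) = 0 \<or> CHAR('k) > d"
  shows
    "(\<forall>e c. Div_star_form N e c \<longrightarrow> convergent (G_seq N d av a (zero_set N e c))) \<and>
     (\<forall>e c. Div_star_form N e c \<longrightarrow>
        G_v N d av a (push_set N d a 1 (zero_set N e c)) = real d * G_v N d av a (zero_set N e c)) \<and>
     (\<forall>e c. Div_star_form N e c \<longrightarrow> preperiodic N d a (zero_set N e c) \<longrightarrow>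
        G_v N d av a (zero_set N e c) = 0) \<and>
     (\<forall>e c. Div_star_form N e c \<longrightarrow> lambda_v N av (zero_set N e c) > B_v N d av a \<longrightarrow>
        G_v N d av a (zero_set N e c) = lambda_v N av (zero_set N e c)) \<and>
     (\<forall>e c. Div_star_form N e c \<longrightarrow>
        \<bar>G_v N d av a (zero_set N e c) - lambda_v N av (zero_set N e c)\<bar> \<le> 2 * B_v N d av a)"
proof -
  interpret polymap_bounded av N d a "B_v N d av a"
    using assms(1,2,4) by (intro polymap_bounded_B_v) auto
  note G = G_v_properties[OF assms(2) cone_zero_set bdd_above_lambda_set_zero_set]
  show ?thesis
  proof (intro conjI allI impI)
    fix e and c :: "(nat \<Rightarrow> nat) \<Rightarrow> 'k"
    assume D: "Div_star_form N e c"
    show "convergent (G_seq N d av a (zero_set N e c))"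
      using G(1)[OF D] .
    show "G_v N d av a (push_set N d a 1 (zero_set N e c)) = real d * G_v N d av a (zero_set N e c)"
      using G(2)[OF D] .
    show "G_v N d av a (zero_set N e c) = 0" if "preperiodic N d a (zero_set N e c)"
      using G(3)[OF D that] .
    show "G_v N d av a (zero_set N e c) = lambda_v N av (zero_set N e c)"
      if "lambda_v N av (zero_set N e c) > B_v N d av a"
      using G(4)[OF D that] .
    show "\<bar>G_v N d av a (zero_set N e c) - lambda_v N av (zero_set N e c)\<bar> \<le> 2 * B_v N d av a"
      using G(5)[OF D] B_nonneg by simp
  qed
qed

end
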